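(* Let $p_1,\ldots,p_m\in\mathbb Z_{>0}$, $p=\operatorname{lcm}(p_1,\ldots,p_m)$, let $\alpha_1,\ldots,\alpha_m$ be words, $e_1,\ldots,e_m\in\mathbb Z_{\ge0}$, and $z,q\in\mathbb C$. Then for every positive integer $k$, \[ S(k)=\sum_{n=1}^{k}z^n n^q\prod_{j=1}^{m}\mathcal H_{\alpha_j}(p_jn)^{e_j}\in\operatorname{span}_{\mathbb C}\{\mathcal H_\beta(pk)\}_\beta, \] where $\beta$ ranges over words.
   Context: A letter is a pair $(r,s)\in\mathbb C^2$ and a word is a finite sequence of letters. For a word $\alpha=((r_1,s_1),\ldots,(r_d,s_d))$ and a positive integer $N$, \[ \mathcal H_{\alpha}(N)=\sum_{N\ge n_1>\cdots>n_d\ge1}\prod_{i=1}^{d}\frac{s_i^{n_i}}{n_i^{r_i}},\qquad \mathcal H_\emptyset(N)=1, \] with $n^r=\exp(r\log n)$ using the real logarithm. *)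

theory Defs
  imports Complex_Main
begin

type_synonym letter = "complex \<times> complex"
type_synonym word = "letter list"

definition npow :: "nat \<Rightarrow> complex \<Rightarrow> complex" where
  "npow n r = exp (r * complex_of_real (ln (real n)))"

definition idx_seqs :: "nat \<Rightarrow> nat \<Rightarrow> nat list set" where
  "idx_seqs d N = {ns. length ns = d \<and> sorted_wrt (>) ns \<and> set ns \<subseteq> {1..N}}"

definition H :: "word \<Rightarrow> nat \<Rightarrow> complex" where
  "H \<alpha> N = (\<Sum>ns\<in>idx_seqs (length \<alpha>) N.
      \<Prod>i<length \<alpha>. (snd (\<alpha> ! i)) ^ (ns ! i) / npow (ns ! i) (fst (\<alpha> ! i)))"

end

(*
  Write t_x(n) = s^n / n^r for a letter x = (r, s), so that
  H_(x beta)(N) = sum_(M <= N) t_x(M) H_beta(M - 1). Hence the span V of the functions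
  N |-> H_beta(N) is closed under g |-> sum_(M <= N) t_x(M) g(M - 1), and also under
  g |-> sum_(M <= N) t_x(M) g(M), because splitting H_beta(M) at n_1 = M merges two letters
  into (r + r', s s'). The quasi-shuffle recursion for H_alpha(N) H_beta(N) then shows that
  V is closed under products. Dilation is handled by a root-of-unity filter: if t^d = s and
  w is a primitive d-th root of unity, then [d | M] t_x(M / d) = (d^r / d) sum_(j < d) t_(r, t w^j)(M).
  Hence V contains N |-> H_alpha(N div d) and, with P = lcm p_j, the function
  N |-> sum_(n <= N div P) z^n n^q prod_j H_(alpha_j)(p_j n)^(e_j), whose value at N = P k
  is the sum S(k).
*)
theory Submission
  imports Defs "HOL-Analysis.Analysis"
begin

lemma sum_if_dvd_eq_sum_multiples:
  fixes d N :: nat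
  assumes "0 < d"
  shows "(\<Sum>M=1..N. if d dvd M then G M else 0) = (\<Sum>n=1..N div d. G (d * n))"
proof -
  have "{M \<in> {1..N}. d dvd M} = (\<lambda>n. d * n) ` {1..N div d}"
    using assms by (auto simp: less_eq_div_iff_mult_less_eq mult.commute)
  moreover have "inj_on (\<lambda>n. d * n) {1..N div d}"
    using assms by (simp add: inj_on_def)
  ultimately show ?thesis
    by (simp add: sum.inter_filter[symmetric] sum.reindex)
qed

lemma sum_roots_unity_power:
  assumes "0 < d"
  defines "\<omega> \<equiv> exp (2 * pi * \<i> / d)"
  shows "(\<Sum>j<d. (\<omega> ^ j) ^ M) = (if d dvd M then of_nat d else 0)"
proof -
  have \<omega>_power: "\<omega> ^ n = exp (2 * of_real pi * \<i> * of_nat n / of_nat d)" for n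
    by (simp add: \<omega>_def exp_of_nat_mult[symmetric] field_simps)
  have \<omega>_power_eq_1: "\<omega> ^ n = 1 \<longleftrightarrow> d dvd n" for n
    unfolding \<omega>_power using assms(1) by (simp add: complex_root_unity_eq_1)
  have "(\<Sum>j<d. (\<omega> ^ j) ^ M) = (\<Sum>j<d. (\<omega> ^ M) ^ j)"
    by (simp add: power_mult[symmetric] mult.commute)
  also have "\<dots> = (if d dvd M then of_nat d else 0)"
  proof (cases "d dvd M")
    case False
    have "(\<omega> ^ M) ^ d = (\<omega> ^ d) ^ M"
      by (simp only: power_mult[symmetric] mult.commute)
    also have "\<dots> = 1"
      using \<omega>_power_eq_1[of d] by simp
    finally have "(\<omega> ^ M) ^ d = 1" .
    with False show ?thesis
      by (simp add: \<omega>_power_eq_1 sum_gp_strict)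
  qed (use \<omega>_power_eq_1[of M] in simp)
  finally show ?thesis .
qed

lemma exists_nth_root: "0 < d \<Longrightarrow> \<exists>t::complex. t ^ d = s"
proof (cases "s = 0")
  case False
  assume "0 < d"
  then have "exp (Ln s / d) ^ d = s"
    using False by (simp add: exp_of_nat_mult[symmetric])
  then show ?thesis ..
qed auto

definition letter_term :: "letter \<Rightarrow> nat \<Rightarrow> complex" where
  "letter_term x n = snd x ^ n / npow n (fst x)"

definition letter_mult :: "letter \<Rightarrow> letter \<Rightarrow> letter" where
  "letter_mult x y = (fst x + fst y, snd x * snd y)"

lemma npow_nonzero: "npow n r \<noteq> 0"
  by (simp add: npow_def)

lemma npow_mult: "0 < a \<Longrightarrow> 0 < b \<Longrightarrow> npow (a * b) r = npow a r * npow b r"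
  by (simp add: npow_def ln_mult distrib_left exp_add)

lemma letter_term_mult: "letter_term (letter_mult x y) n = letter_term x n * letter_term y n"
  by (simp add: letter_term_def letter_mult_def npow_def distrib_right exp_add power_mult_distrib)

lemma idx_seqs_0: "idx_seqs 0 N = {[]}"
  by (auto simp: idx_seqs_def)

lemma idx_seqs_Suc:
  "idx_seqs (Suc d) N = (\<lambda>(M, ns). M # ns) ` (SIGMA M:{1..N}. idx_seqs d (M - 1))"
proof (intro set_eqI iffI)
  fix xs assume "xs \<in> idx_seqs (Suc d) N"
  then obtain M ns where "xs = M # ns" "M \<in> {1..N}" "ns \<in> idx_seqs d (M - 1)"
    by (cases xs) (fastforce simp: idx_seqs_def subset_iff)+
  then show "xs \<in> (\<lambda>(M, ns). M # ns) ` (SIGMA M:{1..N}. idx_seqs d (M - 1))"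
    by force
qed (fastforce simp: idx_seqs_def subset_iff)

lemma finite_idx_seqs: "finite (idx_seqs d N)"
  by (induction d arbitrary: N) (auto simp: idx_seqs_0 idx_seqs_Suc)

lemma H_Nil: "H [] N = 1"
  by (simp add: H_def idx_seqs_0)

lemma H_Cons: "H (x # a) N = (\<Sum>M=1..N. letter_term x M * H a (M - 1))"
proof -
  let ?I = "SIGMA M:{1..N}. idx_seqs (length a) (M - 1)"
  have "inj_on (\<lambda>(M, ns). M # ns) ?I"
    by (auto simp: inj_on_def)
  then have "H (x # a) N = (\<Sum>(M, ns)\<in>?I.
      \<Prod>i<Suc (length a). snd ((x # a) ! i) ^ ((M # ns) ! i) / npow ((M # ns) ! i) (fst ((x # a) ! i)))"
    unfolding H_def length_Cons idx_seqs_Suc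
    by (subst sum.reindex) (simp_all add: comp_def case_prod_unfold)
  also have "\<dots> = (\<Sum>(M, ns)\<in>?I.
      letter_term x M * (\<Prod>i<length a. snd (a ! i) ^ (ns ! i) / npow (ns ! i) (fst (a ! i))))"
    by (intro sum.cong refl) (simp only: prod.lessThan_Suc_shift, simp add: letter_term_def case_prod_unfold)
  also have "\<dots> = (\<Sum>M=1..N. letter_term x M * H a (M - 1))"
    by (subst sum.Sigma[symmetric]) (auto simp: finite_idx_seqs H_def sum_distrib_left)
  finally show ?thesis .
qed

lemma H_Cons_0: "H (x # a) 0 = 0"
  by (simp add: H_Cons)

lemma H_Cons_Suc: "H (x # a) (Suc N) = H (x # a) N + letter_term x (Suc N) * H a N"
  by (simp add: H_Cons)

lemma letter_term_dvd_filter: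
  assumes d: "0 < d"
  obtains c ys where
    "\<And>M. 1 \<le> M \<Longrightarrow> (if d dvd M then letter_term x (M div d) else 0) = (\<Sum>j<d. c * letter_term (ys j) M)"
proof -
  obtain t where t: "t ^ d = snd x"
    using exists_nth_root[OF d] by blast
  define \<omega> where "\<omega> = exp (2 * pi * \<i> / d)"
  define c where "c = npow d (fst x) / d"
  have "(if d dvd M then letter_term x (M div d) else 0)
      = (\<Sum>j<d. c * letter_term (fst x, t * \<omega> ^ j) M)" if M: "1 \<le> M" for M
  proof -
    have "(\<Sum>j<d. c * letter_term (fst x, t * \<omega> ^ j) M)
        = c * t ^ M / npow M (fst x) * (\<Sum>j<d. (\<omega> ^ j) ^ M)"
      by (simp add: letter_term_def power_mult_distrib sum_distrib_left mult.assoc)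
    also have "\<dots> = (if d dvd M then npow d (fst x) * t ^ M / npow M (fst x) else 0)"
      using d sum_roots_unity_power[OF d, of M, folded \<omega>_def] by (simp add: c_def)
    also have "\<dots> = (if d dvd M then letter_term x (M div d) else 0)"
    proof (cases "d dvd M")
      case True
      then obtain n where n: "M = d * n" ..
      with M d have "0 < n"
        by (cases n) auto
      with n d have "npow M (fst x) = npow d (fst x) * npow n (fst x)"
        by (simp add: npow_mult)
      moreover have "t ^ M = snd x ^ n"
        using n t by (simp add: power_mult)
      ultimately show ?thesis
        using n d by (simp add: letter_term_def npow_nonzero)
    qed simp
    finally show ?thesis ..
  qed
  then show ?thesis
    by (rule that)
qed

lemma sum_dilated_letter_term:
  assumes "0 < d"
  obtains c ys where
    "\<And>N G. (\<Sum>n=1..N div d. letter_term x n * G (d * n))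
       = (\<Sum>j<d. c * (\<Sum>M=1..N. letter_term (ys j) M * G M))"
proof -
  obtain c ys where filter:
    "\<And>M. 1 \<le> M \<Longrightarrow> (if d dvd M then letter_term x (M div d) else 0) = (\<Sum>j<d. c * letter_term (ys j) M)"
    using letter_term_dvd_filter[OF assms] by blast
  have "(\<Sum>n=1..N div d. letter_term x n * G (d * n))
      = (\<Sum>j<d. c * (\<Sum>M=1..N. letter_term (ys j) M * G M))" for N G
  proof -
    have "(\<Sum>n=1..N div d. letter_term x n * G (d * n))
        = (\<Sum>M=1..N. if d dvd M then letter_term x (M div d) * G M else 0)"
      using assms sum_if_dvd_eq_sum_multiples[OF assms, of "\<lambda>M. letter_term x (M div d) * G M" N]
      by simp
    also have "\<dots> = (\<Sum>M=1..N. (\<Sum>j<d. c * letter_term (ys j) M) * G M)"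
      by (intro sum.cong refl) (simp add: filter[symmetric])
    also have "\<dots> = (\<Sum>j<d. c * (\<Sum>M=1..N. letter_term (ys j) M * G M))"
      by (simp add: sum_distrib_left sum_distrib_right mult.assoc) (rule sum.swap)
    finally show ?thesis .
  qed
  then show ?thesis
    by (rule that)
qed

inductive H_span :: "(nat \<Rightarrow> complex) \<Rightarrow> bool" where
  word: "H_span (H \<beta>)"
| scale: "H_span f \<Longrightarrow> H_span (\<lambda>N. c * f N)"
| add: "H_span f \<Longrightarrow> H_span g \<Longrightarrow> H_span (\<lambda>N. f N + g N)"

lemma H_span_imp_lincomb:
  assumes "H_span f"
  shows "\<exists>B c. finite B \<and> (\<forall>N. f N = (\<Sum>\<beta>\<in>B. c \<beta> * H \<beta> N))"
  using assms
proof induction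
  case (word \<beta>)
  show ?case
    by (intro exI[of _ "{\<beta>}"] exI[of _ "\<lambda>_. 1"]) simp
next
  case (scale f a)
  then obtain B c where "finite B" "\<forall>N. f N = (\<Sum>\<beta>\<in>B. c \<beta> * H \<beta> N)"
    by blast
  then show ?case
    by (intro exI[of _ B] exI[of _ "\<lambda>\<beta>. a * c \<beta>"]) (simp add: sum_distrib_left mult.assoc)
next
  case (add f g)
  then obtain B1 c1 B2 c2 where B1: "finite B1" "\<forall>N. f N = (\<Sum>\<beta>\<in>B1. c1 \<beta> * H \<beta> N)"
    and B2: "finite B2" "\<forall>N. g N = (\<Sum>\<beta>\<in>B2. c2 \<beta> * H \<beta> N)"
    by blast
  define c where "c \<beta> = (if \<beta> \<in> B1 then c1 \<beta> else 0) + (if \<beta> \<in> B2 then c2 \<beta> else 0)" for \<beta>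
  have extend: "(\<Sum>\<beta>\<in>B. b \<beta> * H \<beta> N) = (\<Sum>\<beta>\<in>B1 \<union> B2. (if \<beta> \<in> B then b \<beta> else 0) * H \<beta> N)"
    if "B \<subseteq> B1 \<union> B2" for B b N
    using that B1(1) B2(1) by (intro sum.mono_neutral_cong_left) auto
  have "f N + g N = (\<Sum>\<beta>\<in>B1 \<union> B2. c \<beta> * H \<beta> N)" for N
    using B1(2) B2(2) extend[of B1 c1 N] extend[of B2 c2 N]
    by (simp add: c_def distrib_right sum.distrib)
  with B1(1) B2(1) show ?case
    by (intro exI[of _ "B1 \<union> B2"] exI[of _ c]) simp
qed

lemma H_span_const: "H_span (\<lambda>N. c)"
  using H_span.scale[OF H_span.word[of "[]"], of c] by (simp add: H_Nil)

lemma H_span_sum: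
  "finite S \<Longrightarrow> (\<And>i. i \<in> S \<Longrightarrow> H_span (f i)) \<Longrightarrow> H_span (\<lambda>N. \<Sum>i\<in>S. f i N)"
  by (induction S rule: finite_induct) (simp_all add: H_span_const[of 0] H_span.add)

lemma H_span_linear_image:
  assumes "\<And>c f. T (\<lambda>N. c * f N) = (\<lambda>N. c * T f N)"
    and "\<And>f g. T (\<lambda>N. f N + g N) = (\<lambda>N. T f N + T g N)"
    and "\<And>\<beta>. H_span (T (H \<beta>))"
    and "H_span f"
  shows "H_span (T f)"
  using assms(4) by induction (simp_all add: assms(1-3) H_span.scale H_span.add)

lemma H_span_partial_sum_shifted:
  assumes "H_span g"
  shows "H_span (\<lambda>N. \<Sum>M=1..N. letter_term x M * g (M - 1))"
proof (rule H_span_linear_image[where T = "\<lambda>g N. \<Sum>M=1..N. letter_term x M * g (M - 1)", OF _ _ _ assms])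
  show "H_span (\<lambda>N. \<Sum>M=1..N. letter_term x M * H \<beta> (M - 1))" for \<beta>
    using H_span.word[of "x # \<beta>"] by (simp add: H_Cons[abs_def])
qed (simp_all add: sum_distrib_left sum.distrib algebra_simps)

lemma H_span_partial_sum:
  assumes "H_span g"
  shows "H_span (\<lambda>N. \<Sum>M=1..N. letter_term x M * g M)"
proof (rule H_span_linear_image[where T = "\<lambda>g N. \<Sum>M=1..N. letter_term x M * g M", OF _ _ _ assms])
  show "H_span (\<lambda>N. \<Sum>M=1..N. letter_term x M * H \<beta> M)" for \<beta>
  proof (cases \<beta>)
    case Nil
    then show ?thesis
      using H_span.word[of "[x]"] by (simp add: H_Cons[abs_def] H_Nil)
  next
    case (Cons y \<gamma>)
    have "H \<beta> M = H \<beta> (M - 1) + letter_term y M * H \<gamma> (M - 1)" if "1 \<le> M" for M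
      using that Cons by (cases M) (simp_all add: H_Cons_Suc)
    then have "(\<Sum>M=1..N. letter_term x M * H \<beta> M) = H (x # \<beta>) N + H (letter_mult x y # \<gamma>) N" for N
      by (simp add: H_Cons letter_term_mult sum.distrib[symmetric] algebra_simps)
    then show ?thesis
      using H_span.add[OF H_span.word H_span.word] by simp
  qed
qed (simp_all add: sum_distrib_left sum.distrib algebra_simps)

lemma H_Cons_mult_H_Cons:
  "H (x # a) N * H (y # b) N =
      (\<Sum>M=1..N. letter_term x M * (H a (M - 1) * H (y # b) (M - 1)))
    + (\<Sum>M=1..N. letter_term y M * (H (x # a) (M - 1) * H b (M - 1)))
    + (\<Sum>M=1..N. letter_term (letter_mult x y) M * (H a (M - 1) * H b (M - 1)))"
  by (induction N) (simp_all add: H_Cons_0 H_Cons_Suc letter_term_mult algebra_simps)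

lemma H_span_mult_H: "H_span (\<lambda>N. H a N * H b N)"
proof (induction "length a + length b" arbitrary: a b rule: less_induct)
  case less
  show ?case
  proof (cases "a = [] \<or> b = []")
    case True
    then show ?thesis
      using H_span.word[of a] H_span.word[of b] by (auto simp: H_Nil)
  next
    case False
    then obtain x a' y b' where a: "a = x # a'" and b: "b = y # b'"
      by (meson neq_Nil_conv)
    have "H_span (\<lambda>N. H a' N * H b N)" "H_span (\<lambda>N. H a N * H b' N)" "H_span (\<lambda>N. H a' N * H b' N)"
      using less a b by simp_all
    then show ?thesis
      unfolding a b H_Cons_mult_H_Cons
      by (intro H_span.add H_span_partial_sum_shifted) (simp_all add: a b)
  qed
qed

lemma H_span_mult:
  assumes f: "H_span f" and g: "H_span g"
  shows "H_span (\<lambda>N. f N * g N)"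
proof -
  have "H_span (\<lambda>N. H \<alpha> N * g N)" for \<alpha>
    by (rule H_span_linear_image[where T = "\<lambda>g N. H \<alpha> N * g N", OF _ _ _ g])
      (simp_all add: algebra_simps H_span_mult_H)
  then show ?thesis
    by (rule H_span_linear_image[where T = "\<lambda>f N. f N * g N", OF _ _ _ f, rotated 2])
      (simp_all add: algebra_simps)
qed

lemma H_span_power: "H_span f \<Longrightarrow> H_span (\<lambda>N. f N ^ e)"
  by (induction e) (simp_all add: H_span_const H_span_mult)

lemma H_span_prod:
  "finite S \<Longrightarrow> (\<And>i. i \<in> S \<Longrightarrow> H_span (f i)) \<Longrightarrow> H_span (\<lambda>N. \<Prod>i\<in>S. f i N)"
  by (induction S rule: finite_induct) (simp_all add: H_span_const H_span_mult)

lemma H_span_dilated_partial_sum: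
  assumes "0 < d" and "H_span g"
  shows "H_span (\<lambda>N. \<Sum>n=1..N div d. letter_term x n * g (d * n))"
proof -
  obtain c ys where eq: "\<And>N G. (\<Sum>n=1..N div d. letter_term x n * G (d * n))
      = (\<Sum>j<d. c * (\<Sum>M=1..N. letter_term (ys j) M * G M))"
    using sum_dilated_letter_term[OF assms(1)] by blast
  have "H_span (\<lambda>N. \<Sum>j<d. c * (\<Sum>M=1..N. letter_term (ys j) M * g M))"
    by (intro H_span_sum H_span.scale H_span_partial_sum assms(2)) simp
  then show ?thesis
    by (simp only: eq)
qed

lemma H_span_H_div:
  assumes "0 < d"
  shows "H_span (\<lambda>N. H a (N div d))"
proof (induction a)
  case Nil
  then show ?case
    by (simp add: H_Nil H_span_const)
next
  case (Cons x a)
  obtain c ys where eq: "\<And>N G. (\<Sum>n=1..N div d. letter_term x n * G (d * n))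
      = (\<Sum>j<d. c * (\<Sum>M=1..N. letter_term (ys j) M * G M))"
    using sum_dilated_letter_term[OF assms] by blast
  have "(d * n - 1) div d = n - 1" if "1 \<le> n" for n
    using that assms by (intro div_nat_eqI) (auto simp: diff_mult_distrib2)
  then have "H (x # a) (N div d) = (\<Sum>n=1..N div d. letter_term x n * H a ((d * n - 1) div d))" for N
    by (simp add: H_Cons)
  also have "\<dots> N = (\<Sum>j<d. c * (\<Sum>M=1..N. letter_term (ys j) M * H a ((M - 1) div d)))" for N
    by (rule eq)
  finally have "H (x # a) (N div d) = (\<Sum>j<d. c * (\<Sum>M=1..N. letter_term (ys j) M * H a ((M - 1) div d)))" for N .
  moreover have "H_span (\<lambda>N. \<Sum>j<d. c * (\<Sum>M=1..N. letter_term (ys j) M * H a ((M - 1) div d)))"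
    by (intro H_span_sum H_span.scale H_span_partial_sum_shifted[OF Cons.IH]) simp
  ultimately show ?case
    by simp
qed

lemma letter_term_uminus: "letter_term (- r, s) n = s ^ n * npow n r"
  by (simp add: letter_term_def npow_def exp_minus divide_inverse)

lemma H_span_dilated_weighted_sum:
  fixes p :: "nat \<Rightarrow> nat"
  assumes "0 < P" and "\<And>j. j < m \<Longrightarrow> p j dvd P"
  shows "H_span (\<lambda>N. \<Sum>n=1..N div P. z ^ n * npow n q * (\<Prod>j<m. H (\<alpha> j) (p j * n) ^ e j))"
proof -
  define Q where "Q M = (\<Prod>j<m. H (\<alpha> j) (M div (P div p j)) ^ e j)" for M
  have cofactor_pos: "0 < P div p j" and cofactor: "P * n div (P div p j) = p j * n" if "j < m" for j n
    using assms(1) assms(2)[OF that] by auto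
  have "H_span Q"
    unfolding Q_def by (intro H_span_prod H_span_power H_span_H_div) (simp_all add: cofactor_pos)
  have Q_dilated: "Q (P * n) = (\<Prod>j<m. H (\<alpha> j) (p j * n) ^ e j)" for n
    unfolding Q_def by (intro prod.cong refl) (simp add: cofactor)
  show ?thesis
    using H_span_dilated_partial_sum[OF assms(1) \<open>H_span Q\<close>, of "(- q, z)"]
    by (simp add: Q_dilated letter_term_uminus)
qed

theorem theorem6p1:
  fixes m :: nat and p :: "nat \<Rightarrow> nat" and \<alpha> :: "nat \<Rightarrow> word"
    and e :: "nat \<Rightarrow> nat" and z q :: complex
  assumes "\<forall>j<m. p j > 0"
  shows "\<exists>B :: word set. \<exists>c :: word \<Rightarrow> complex. finite B \<and>
    (\<forall>k::nat. k \<ge> 1 \<longrightarrow>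
      (\<Sum>n=1..k. z ^ n * npow n q * (\<Prod>j<m. (H (\<alpha> j) (p j * n)) ^ (e j)))
      = (\<Sum>\<beta>\<in>B. c \<beta> * H \<beta> (Lcm (p ` {..<m}) * k)))"
proof -
  define P where "P = Lcm (p ` {..<m})"
  have "P \<noteq> 0"
    using assms by (auto simp: P_def Lcm_0_iff_nat)
  then have "0 < P"
    by simp
  moreover have "p j dvd P" if "j < m" for j
    using that by (simp add: P_def dvd_Lcm)
  ultimately have "H_span (\<lambda>N. \<Sum>n=1..N div P. z ^ n * npow n q * (\<Prod>j<m. H (\<alpha> j) (p j * n) ^ e j))"
    by (rule H_span_dilated_weighted_sum)
  then obtain B c where "finite B" and lincomb: "\<And>N.
      (\<Sum>n=1..N div P. z ^ n * npow n q * (\<Prod>j<m. H (\<alpha> j) (p j * n) ^ e j)) = (\<Sum>\<beta>\<in>B. c \<beta> * H \<beta> N)"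
    using H_span_imp_lincomb by blast
  have "(\<Sum>n=1..k. z ^ n * npow n q * (\<Prod>j<m. H (\<alpha> j) (p j * n) ^ e j)) = (\<Sum>\<beta>\<in>B. c \<beta> * H \<beta> (P * k))" for k
    using lincomb[of "P * k"] \<open>0 < P\<close> by simp
  with \<open>finite B\<close> show ?thesis
    unfolding P_def by blast
qed

end
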